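(* Let $F$ be a field whose characteristic is not $2$, and let $k\geq 4$ be an integer. (i) Let $x\in F$. If the characteristic of $F$ is not $3$ or $x\neq 0$, then $x$ can be written as $x=a_1+\cdots+a_k$ with $a_1,\ldots,a_k\in F$ and $a_1a_2\cdots a_k=-1$. (ii) If the characteristic of $F$ is not $3$, then every $x\in F$ can be written as $x=a_1+\cdots+a_k$ with $a_1,\ldots,a_k\in F$ and $a_1a_2\cdots a_k=1$. *)

theory Defs
  imports Main
begin

end

(*
  Padding with ones reduces everything to four summands: if y = x - (k - 4) is a sum of four
  elements with product q, appending k - 4 ones gives k summands with sum x and product q.
  Four summands are supplied by explicit identities: for y \<noteq> 0,
    y = 2/y - 2/y + y/2 + y/2                      with product -1,
    y = 8/(3y) - 8/(3y) + 9y/8 - y/8               with product 1,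
  and for y = 0 the sums 1 - 1 + 1 - 1 (product 1) and -9/2 + 1/6 + 1/3 + 4 (product -1).
  Only the last identity needs characteristic \<noteq> 3.  In characteristic 3 with y = 0 one
  instead replaces two of the padding ones by -1 and takes four summands with sum 4, or,
  for k = 5, takes all five summands equal to -1.
*)
theory Submission
  imports Defs
begin

lemma of_nat_prime_eq_0_iff_CHAR:
  assumes "\<And>d. d dvd p \<Longrightarrow> d = 1 \<or> d = p"
  shows "(of_nat p :: 'a::{semiring_1, zero_neq_one}) = 0 \<longleftrightarrow> CHAR('a) = p"
  using assms of_nat_eq_0_iff_char_dvd by (metis CHAR_not_1 One_nat_def dvd_refl)

lemma two_eq_0_iff_CHAR: "(2::'a::{semiring_1, zero_neq_one}) = 0 \<longleftrightarrow> CHAR('a) = 2"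
proof (rule of_nat_prime_eq_0_iff_CHAR[of 2, unfolded of_nat_numeral])
  fix d :: nat
  assume "d dvd 2"
  then have "d \<le> 2"
    by (rule dvd_imp_le) simp
  then have "d = 0 \<or> d = 1 \<or> d = 2"
    by arith
  with \<open>d dvd 2\<close> show "d = 1 \<or> d = 2"
    by auto
qed

lemma three_eq_0_iff_CHAR: "(3::'a::{semiring_1, zero_neq_one}) = 0 \<longleftrightarrow> CHAR('a) = 3"
proof (rule of_nat_prime_eq_0_iff_CHAR[of 3, unfolded of_nat_numeral])
  fix d :: nat
  assume "d dvd 3"
  then have "d \<le> 3"
    by (rule dvd_imp_le) simp
  then have "d = 0 \<or> d = 1 \<or> d = 2 \<or> d = 3"
    by arith
  with \<open>d dvd 3\<close> show "d = 1 \<or> d = 3"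
    by auto
qed

definition sum_prod_repr :: "nat \<Rightarrow> 'a::comm_semiring_1 \<Rightarrow> 'a \<Rightarrow> bool" where
  "sum_prod_repr k p s \<longleftrightarrow> (\<exists>a::nat \<Rightarrow> 'a. s = (\<Sum>i<k. a i) \<and> (\<Prod>i<k. a i) = p)"

lemma sum_prod_repr_0: "sum_prod_repr 0 1 0"
  by (simp add: sum_prod_repr_def)

lemma sum_prod_repr_Suc:
  assumes "sum_prod_repr k p s"
  shows "sum_prod_repr (Suc k) (p * c) (s + c)"
proof -
  obtain a where s: "s = (\<Sum>i<k. a i)" and p: "(\<Prod>i<k. a i) = p"
    using assms by (auto simp: sum_prod_repr_def)
  let ?a = "a(k := c)"
  have "(\<Sum>i<k. ?a i) = s" "(\<Prod>i<k. ?a i) = p"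
    using s p by (auto intro: sum.cong prod.cong)
  then have "s + c = (\<Sum>i<Suc k. ?a i) \<and> (\<Prod>i<Suc k. ?a i) = p * c"
    by simp
  then show ?thesis
    unfolding sum_prod_repr_def by blast
qed

lemma sum_prod_repr_4: "sum_prod_repr 4 (a * b * c * d) (a + b + c + d)"
  using sum_prod_repr_Suc[OF sum_prod_repr_Suc[OF sum_prod_repr_Suc[OF
      sum_prod_repr_Suc[OF sum_prod_repr_0]]]]
  by (simp add: numeral_eq_Suc)

lemma sum_prod_repr_add_ones:
  assumes "sum_prod_repr k p s"
  shows "sum_prod_repr (k + m) p (s + of_nat m)"
proof (induction m)
  case 0
  then show ?case using assms by simp
next
  case (Suc m)
  from sum_prod_repr_Suc[OF Suc.IH, of 1] show ?case
    by (simp add: ac_simps)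
qed

lemma sum_prod_repr_4_neg_one:
  fixes u v :: "'a::comm_ring_1"
  assumes "u * v = 1"
  shows "sum_prod_repr 4 (-1) (2 * u)"
proof -
  have sum: "v + -v + u + u = 2 * u"
    by (simp flip: mult_2)
  have "v * (-v) * u * u = - ((u * v)^2)"
    by (simp add: algebra_simps power2_eq_square)
  also have "\<dots> = -1"
    using assms by simp
  finally have prod: "v * (-v) * u * u = -1" .
  show ?thesis
    using sum_prod_repr_4[of v "-v" u u] unfolding sum prod .
qed

lemma sum_prod_repr_4_neg_one_zero:
  fixes h t :: "'a::comm_ring_1"
  assumes "2 * h = 1" and "3 * t = 1"
  shows "sum_prod_repr 4 (-1) (0::'a)"
proof -
  have "-9*h + h*t + t + 4 = h * (3*t - 1) - (t + 4) * (2*h - 1)"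
    by (simp add: algebra_simps)
  also have "\<dots> = 0"
    using assms by simp
  finally have sum: "-9*h + h*t + t + 4 = 0" .
  have "(-9*h) * (h*t) * t * 4 = - (((2*h) * (3*t))^2)"
    by (simp add: algebra_simps power2_eq_square)
  also have "\<dots> = -1"
    using assms by simp
  finally have prod: "(-9*h) * (h*t) * t * 4 = -1" .
  show ?thesis
    using sum_prod_repr_4[of "-9*h" "h*t" t 4] unfolding sum prod .
qed

lemma sum_prod_repr_4_one:
  fixes s w :: "'a::comm_ring_1"
  assumes "s * (3 * w) = 1"
  shows "sum_prod_repr 4 1 (8 * w)"
proof -
  have sum: "s + -s + 9*w + -w = 8 * w"
    by (simp add: algebra_simps)
  have "s * (-s) * (9*w) * (-w) = (s * (3*w))^2"
    by (simp add: algebra_simps power2_eq_square)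
  also have "\<dots> = 1"
    using assms by simp
  finally have prod: "s * (-s) * (9*w) * (-w) = 1" .
  show ?thesis
    using sum_prod_repr_4[of s "-s" "9*w" "-w"] unfolding sum prod .
qed

lemma sum_prod_repr_one:
  fixes x :: "'a::field"
  assumes two: "(2::'a) \<noteq> 0" and three: "(3::'a) \<noteq> 0" and "k \<ge> 4"
  shows "sum_prod_repr k 1 x"
proof -
  obtain m where k: "k = 4 + m"
    using \<open>k \<ge> 4\<close> by (metis le_add_diff_inverse)
  define y where "y = x - of_nat m"
  have "sum_prod_repr 4 1 y"
  proof (cases "y = 0")
    case True
    then show ?thesis
      using sum_prod_repr_4[of 1 "-1" 1 "-1::'a"] by simp
  next
    case False
    have "(8::'a) = 2 * 2 * 2"
      by simp
    with two have "(8::'a) \<noteq> 0"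
      by (simp only: mult_eq_0_iff) simp
    with three False have nonzero: "3 * (y / 8) \<noteq> 0" and y: "8 * (y / 8) = y"
      by simp_all
    from sum_prod_repr_4_one[OF left_inverse[OF nonzero]] show ?thesis
      unfolding y .
  qed
  from sum_prod_repr_add_ones[OF this, of m] show ?thesis
    by (simp add: k y_def)
qed

lemma sum_prod_repr_4_neg_one_field:
  fixes y :: "'a::field"
  assumes two: "(2::'a) \<noteq> 0" and "(3::'a) \<noteq> 0 \<or> y \<noteq> 0"
  shows "sum_prod_repr 4 (-1) y"
proof (cases "y = 0")
  case True
  with assms show ?thesis
    using sum_prod_repr_4_neg_one_zero[of "1/2" "1/3::'a"] by simp
next
  case False
  with two show ?thesis
    using sum_prod_repr_4_neg_one[of "y/2" "2/y"] by simp
qed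

lemma sum_prod_repr_neg_one_char_3:
  assumes two: "(2::'a::field) \<noteq> 0" and three: "(3::'a) = 0" and "m \<noteq> 0"
  shows "sum_prod_repr (4 + m) (-1) (of_nat m :: 'a)"
proof -
  consider "m = 1" | m' where "m = m' + 2"
    using \<open>m \<noteq> 0\<close> by (metis One_nat_def add_2_eq_Suc' not0_implies_Suc)
  then show ?thesis
  proof cases
    case 1
    have "sum_prod_repr 5 (-1) (-5::'a)"
      using sum_prod_repr_Suc[OF sum_prod_repr_4[of "-1" "-1" "-1" "-1::'a"], of "-1"]
      by simp
    moreover have "(-5::'a) = 1 - 2 * 3"
      by simp
    ultimately show ?thesis
      using three 1 by simp
  next
    case 2
    have "sum_prod_repr 4 (-1) (2 * 2::'a)"
      using two sum_prod_repr_4_neg_one[of 2 "1/2::'a"] by simp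
    from sum_prod_repr_Suc[OF sum_prod_repr_Suc[OF this, of "-1"], of "-1"]
    have "sum_prod_repr 6 (-1) (2::'a)"
      by (simp add: numeral_eq_Suc)
    from sum_prod_repr_add_ones[OF this, of m'] show ?thesis
      using 2 by (simp add: ac_simps)
  qed
qed

lemma sum_prod_repr_neg_one:
  fixes x :: "'a::field"
  assumes two: "(2::'a) \<noteq> 0" and "(3::'a) \<noteq> 0 \<or> x \<noteq> 0" and "k \<ge> 4"
  shows "sum_prod_repr k (-1) x"
proof -
  obtain m where k: "k = 4 + m"
    using \<open>k \<ge> 4\<close> by (metis le_add_diff_inverse)
  define y where "y = x - of_nat m"
  show ?thesis
  proof (cases "(3::'a) = 0 \<and> y = 0")
    case True
    then have x: "x = of_nat m"
      by (simp add: y_def)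
    with True assms(2) have "m \<noteq> 0"
      by (metis of_nat_0)
    with two True x show ?thesis
      using sum_prod_repr_neg_one_char_3 k by blast
  next
    case False
    with two have "sum_prod_repr 4 (-1) y"
      using sum_prod_repr_4_neg_one_field by blast
    from sum_prod_repr_add_ones[OF this, of m] show ?thesis
      by (simp add: k y_def)
  qed
qed

theorem theorem1p2:
  fixes k :: nat
  assumes "CHAR('a::field) \<noteq> 2" and "k \<ge> 4"
  shows "(\<forall>x::'a. (CHAR('a) \<noteq> 3 \<or> x \<noteq> 0) \<longrightarrow>
           (\<exists>a::nat \<Rightarrow> 'a. x = (\<Sum>i<k. a i) \<and> (\<Prod>i<k. a i) = -1))
      \<and> (CHAR('a) \<noteq> 3 \<longrightarrow> (\<forall>x::'a.
           \<exists>a::nat \<Rightarrow> 'a. x = (\<Sum>i<k. a i) \<and> (\<Prod>i<k. a i) = 1))"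
proof -
  have two: "(2::'a) \<noteq> 0"
    using assms(1) two_eq_0_iff_CHAR by blast
  have "sum_prod_repr k (-1) x" if "CHAR('a) \<noteq> 3 \<or> x \<noteq> 0" for x :: 'a
    using sum_prod_repr_neg_one[OF two _ assms(2)] that three_eq_0_iff_CHAR by blast
  moreover have "sum_prod_repr k 1 x" if "CHAR('a) \<noteq> 3" for x :: 'a
    using sum_prod_repr_one[OF two _ assms(2)] that three_eq_0_iff_CHAR by blast
  ultimately show ?thesis
    unfolding sum_prod_repr_def by blast
qed

end
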